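(* Let $\alpha\in(0,1)$. There is a constant $C$ depending only on $\alpha$ such that for all $f_1,f_2\in\mathcal V_1$, $$|c(f_1)-c(f_2)|\le C\,\|\rho(f_1-f_2)\|_{L^\infty}^{1-\alpha}.$$
   Context: Fix $\alpha\in(0,1)$ and set $c_{1,\alpha}=\frac{2^{2\alpha-1}\Gamma(\frac12+\alpha)}{\sqrt{\pi}\,\Gamma(1-\alpha)}$. Let $\rho(x)=(1+|x|)^{-\alpha}$ and $\mathcal V_0=\{f\in C(\mathbb{R}): f\text{ even},\ \|\rho f\|_{L^\infty}<\infty\}$. Let $\eta=2\left(\frac{3}{2(3-2\alpha)(5-2\alpha)(1+4^{\alpha})}\right)^{1/\min(\alpha,1-\alpha)}$. $\mathcal V_1$ is the set of $f\in\mathcal V_0$ such that $f(0)=1$; $f\ge0$ and $f$ is non-increasing on $[0,\infty)$; $x\mapsto f(\sqrt x)$ is convex on $[0,\infty)$; $f(x)\ge\max(0,1-x^2)$ for all $x$; and $f'_-(1/2)\le-\eta$. For $f\in\mathcal V_1$, $c(f)=\frac{2\alpha(1+2\alpha)}{3}c_{1,\alpha}\int_0^\infty\frac{1-f(\xi)}{\xi^{1+2\alpha}}\,d\xi$. *)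

theory Defs
  imports "HOL-Analysis.Analysis"
begin

definition c1 :: "real \<Rightarrow> real" where
  "c1 \<alpha> = 2 powr (2*\<alpha> - 1) * Gamma (1/2 + \<alpha>) / (sqrt pi * Gamma (1 - \<alpha>))"

definition rho :: "real \<Rightarrow> real \<Rightarrow> real" where
  "rho \<alpha> x = (1 + \<bar>x\<bar>) powr (- \<alpha>)"

definition V0 :: "real \<Rightarrow> (real \<Rightarrow> real) set" where
  "V0 \<alpha> = {f. continuous_on UNIV f \<and> (\<forall>x. f (-x) = f x)
              \<and> (\<exists>B. \<forall>x. \<bar>rho \<alpha> x * f x\<bar> \<le> B)}"

definition eta :: "real \<Rightarrow> real" where
  "eta \<alpha> = 2 * (3 / (2 * (3 - 2*\<alpha>) * (5 - 2*\<alpha>) * (1 + 4 powr \<alpha>)))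
                 powr (1 / min \<alpha> (1 - \<alpha>))"

definition has_left_deriv :: "(real \<Rightarrow> real) \<Rightarrow> real \<Rightarrow> real \<Rightarrow> bool" where
  "has_left_deriv f a d \<longleftrightarrow> ((\<lambda>h. (f a - f (a - h)) / h) \<longlongrightarrow> d) (at_right 0)"

definition V1 :: "real \<Rightarrow> (real \<Rightarrow> real) set" where
  "V1 \<alpha> = {f \<in> V0 \<alpha>. f 0 = 1
      \<and> (\<forall>x\<ge>0. f x \<ge> 0)
      \<and> (\<forall>x y. 0 \<le> x \<longrightarrow> x \<le> y \<longrightarrow> f y \<le> f x)
      \<and> convex_on {0..} (\<lambda>x. f (sqrt x))
      \<and> (\<forall>x. f x \<ge> max 0 (1 - x^2))
      \<and> (\<exists>d. has_left_deriv f (1/2) d \<and> d \<le> - eta \<alpha>)}"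

definition cf :: "real \<Rightarrow> (real \<Rightarrow> real) \<Rightarrow> real" where
  "cf \<alpha> f = 2 * \<alpha> * (1 + 2*\<alpha>) / 3 * c1 \<alpha> *
      (LINT \<xi>:{0<..}|lborel. (1 - f \<xi>) / \<xi> powr (1 + 2*\<alpha>))"

definition weighted_sup_norm :: "real \<Rightarrow> (real \<Rightarrow> real) \<Rightarrow> real" where
  "weighted_sup_norm \<alpha> g = (SUP x. \<bar>rho \<alpha> x * g x\<bar>)"

end

theory Submission
  imports Defs
begin

text \<open>
  Every \<open>f \<in> V1 \<alpha>\<close> lies between \<open>max 0 (1 - \<xi>\<^sup>2)\<close> and \<open>1\<close>. Hence for \<open>f1, f2 \<in> V1 \<alpha>\<close>
  the difference \<open>f1 - f2\<close> is bounded both by \<open>\<xi>\<^sup>2\<close> and, if \<open>\<delta> \<le> 1\<close> is the weighted sup norm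
  of \<open>f1 - f2\<close>, by \<open>\<delta> (1 + \<xi>) powr \<alpha> \<le> \<delta> (1 + \<xi> powr \<alpha>)\<close>. Splitting the integral of
  \<open>(f1 - f2)(\<xi>) / \<xi> powr (1 + 2\<alpha>)\<close> at \<open>\<xi> = sqrt \<delta>\<close> and using the first bound below and the
  second above the split point, each piece is \<open>O(\<delta> powr (1 - \<alpha>))\<close>.
\<close>

lemma powr_add_le_add_powr:
  fixes a b p :: real
  assumes "0 \<le> a" "0 \<le> b" "0 \<le> p" "p \<le> 1"
  shows "(a + b) powr p \<le> a powr p + b powr p"
proof (cases "a + b = 0")
  case True
  then show ?thesis using assms by simp
next
  case False
  then have s: "0 < a + b" using assms by linarith
  have le_powr: "x \<le> x powr p" if "0 \<le> x" "x \<le> 1" for x :: real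
    using powr_mono'[of p 1 x] that assms by simp
  have "(a + b) powr p = (a + b) powr p * (a / (a + b) + b / (a + b))"
    using s by (simp add: add_divide_distrib[symmetric])
  also have "\<dots> \<le> (a + b) powr p * ((a / (a + b)) powr p + (b / (a + b)) powr p)"
    using s assms by (intro mult_left_mono add_mono le_powr) auto
  also have "\<dots> = a powr p + b powr p"
    using s assms by (simp add: powr_divide distrib_left)
  finally show ?thesis .
qed

lemma has_integral_powr_from_0_open:
  fixes a t :: real
  assumes "-1 < a" "0 \<le> t"
  shows "((\<lambda>x. x powr a) has_integral t powr (a + 1) / (a + 1)) {0<..t}"
proof (rule has_integral_spike_set_eq[THEN iffD1, OF _ _ has_integral_powr_from_0[OF assms]])
  show "negligible {x \<in> {0..t} - {0<..t}. x powr a \<noteq> 0}"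
    by (rule negligible_subset[of "{0}"]) auto
  show "negligible {x \<in> {0<..t} - {0..t}. x powr a \<noteq> 0}"
    by (rule negligible_subset[of "{}"]) auto
qed

lemma has_integral_powr_majorant:
  fixes \<alpha> t A B :: real
  assumes \<alpha>: "0 < \<alpha>" "\<alpha> < 1" and t: "0 < t"
  shows "((\<lambda>x. (if x \<in> {0<..t} then x powr (1 - 2*\<alpha>) else 0)
              + (if x \<in> {t..} then A * x powr (-1 - 2*\<alpha>) + B * x powr (-1 - \<alpha>) else 0))
          has_integral t powr (2 - 2*\<alpha>) / (2 - 2*\<alpha>) + A * (t powr (-2*\<alpha>) / (2*\<alpha>))
                       + B * (t powr (-\<alpha>) / \<alpha>)) {0<..}"
proof -
  have near: "((\<lambda>x. x powr (1 - 2*\<alpha>)) has_integral t powr (2 - 2*\<alpha>) / (2 - 2*\<alpha>)) {0<..t}"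
    using has_integral_powr_from_0_open[of "1 - 2*\<alpha>" t] \<alpha> t by (simp add: algebra_simps)
  have far1: "((\<lambda>x. x powr (-1 - 2*\<alpha>)) has_integral t powr (-2*\<alpha>) / (2*\<alpha>)) {t..}"
    using has_integral_powr_to_inf[of "-1 - 2*\<alpha>" t] \<alpha> t by simp
  have far2: "((\<lambda>x. x powr (-1 - \<alpha>)) has_integral t powr (-\<alpha>) / \<alpha>) {t..}"
    using has_integral_powr_to_inf[of "-1 - \<alpha>" t] \<alpha> t by simp
  have far: "((\<lambda>x. A * x powr (-1 - 2*\<alpha>) + B * x powr (-1 - \<alpha>)) has_integral
              A * (t powr (-2*\<alpha>) / (2*\<alpha>)) + B * (t powr (-\<alpha>) / \<alpha>)) {t..}"
    by (intro has_integral_add has_integral_mult_right far1 far2)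
  have "((\<lambda>x. if x \<in> {0<..t} then x powr (1 - 2*\<alpha>) else 0) has_integral
          t powr (2 - 2*\<alpha>) / (2 - 2*\<alpha>)) {0<..}"
    using near by (subst has_integral_restrict) auto
  moreover have "((\<lambda>x. if x \<in> {t..} then A * x powr (-1 - 2*\<alpha>) + B * x powr (-1 - \<alpha>) else 0)
      has_integral A * (t powr (-2*\<alpha>) / (2*\<alpha>)) + B * (t powr (-\<alpha>) / \<alpha>)) {0<..}"
    using far t by (subst has_integral_restrict) auto
  ultimately show ?thesis
    by (simp only: add.assoc has_integral_add)
qed

lemma abs_div_powr_le_majorant:
  fixes d :: "real \<Rightarrow> real"
  assumes \<alpha>: "0 \<le> \<alpha>" "\<alpha> \<le> 1" and \<delta>: "0 \<le> \<delta>" and x: "0 < x"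
    and quad: "\<bar>d x\<bar> \<le> x\<^sup>2" and weighted: "\<bar>d x\<bar> \<le> \<delta> * (1 + x) powr \<alpha>"
  shows "\<bar>d x / x powr (1 + 2*\<alpha>)\<bar> \<le> (if x \<in> {0<..t} then x powr (1 - 2*\<alpha>) else 0)
           + (if x \<in> {t..} then \<delta> * x powr (-1 - 2*\<alpha>) + \<delta> * x powr (-1 - \<alpha>) else 0)"
proof -
  have p: "0 < x powr (1 + 2*\<alpha>)" using x by simp
  have lhs: "\<bar>d x / x powr (1 + 2*\<alpha>)\<bar> = \<bar>d x\<bar> / x powr (1 + 2*\<alpha>)"
    using p by simp
  show ?thesis
  proof (cases "x \<le> t")
    case True
    have "\<bar>d x\<bar> / x powr (1 + 2*\<alpha>) \<le> x powr 2 / x powr (1 + 2*\<alpha>)"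
      using quad p x by (intro divide_right_mono) (auto simp: powr_numeral)
    also have "\<dots> = x powr (1 - 2*\<alpha>)"
      by (simp add: powr_diff[symmetric] algebra_simps)
    moreover have "0 \<le> \<delta> * x powr (-1 - 2*\<alpha>) + \<delta> * x powr (-1 - \<alpha>)"
      using \<delta> by simp
    ultimately show ?thesis using True x lhs by auto
  next
    case False
    have "\<bar>d x\<bar> \<le> \<delta> * (1 + x) powr \<alpha>" by (rule weighted)
    also have "\<dots> \<le> \<delta> * (1 + x powr \<alpha>)"
      using powr_add_le_add_powr[of 1 x \<alpha>] x \<alpha> \<delta> by (intro mult_left_mono) simp_all
    finally have "\<bar>d x\<bar> / x powr (1 + 2*\<alpha>) \<le> \<delta> * (1 + x powr \<alpha>) / x powr (1 + 2*\<alpha>)"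
      using p by (intro divide_right_mono) auto
    also have "\<dots> = \<delta> * x powr (-1 - 2*\<alpha>) + \<delta> * x powr (-1 - \<alpha>)"
      using x by (simp add: field_simps flip: powr_add)
    finally show ?thesis using False x lhs by auto
  qed
qed

lemma powr_majorant_integral_at_sqrt_le:
  fixes \<alpha> \<delta> :: real
  assumes \<alpha>: "0 < \<alpha>" "\<alpha> < 1" and \<delta>: "0 < \<delta>" "\<delta> \<le> 1"
  defines "t \<equiv> \<delta> powr (1/2)"
  shows "t powr (2 - 2*\<alpha>) / (2 - 2*\<alpha>) + \<delta> * (t powr (-2*\<alpha>) / (2*\<alpha>)) + \<delta> * (t powr (-\<alpha>) / \<alpha>)
           \<le> (1 / (2 - 2*\<alpha>) + 3 / (2*\<alpha>)) * \<delta> powr (1 - \<alpha>)"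
proof -
  have shift: "\<delta> * \<delta> powr r = \<delta> powr (1 + r)" for r
    using \<delta> by (simp add: powr_add)
  have "t powr (2 - 2*\<alpha>) = \<delta> powr (1 - \<alpha>)" "\<delta> * t powr (-2*\<alpha>) = \<delta> powr (1 - \<alpha>)"
    "\<delta> * t powr (-\<alpha>) = \<delta> powr (1 - \<alpha>/2)"
    by (simp_all add: t_def powr_powr shift algebra_simps)
  moreover have "\<delta> powr (1 - \<alpha>/2) / \<alpha> \<le> \<delta> powr (1 - \<alpha>) / \<alpha>"
    using \<delta> \<alpha> by (intro divide_right_mono powr_mono') auto
  ultimately have "t powr (2 - 2*\<alpha>) / (2 - 2*\<alpha>) + \<delta> * (t powr (-2*\<alpha>) / (2*\<alpha>))
        + \<delta> * (t powr (-\<alpha>) / \<alpha>)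
      \<le> \<delta> powr (1 - \<alpha>) / (2 - 2*\<alpha>) + \<delta> powr (1 - \<alpha>) / (2*\<alpha>) + \<delta> powr (1 - \<alpha>) / \<alpha>"
    by simp
  also have "\<dots> = (1 / (2 - 2*\<alpha>) + 3 / (2*\<alpha>)) * \<delta> powr (1 - \<alpha>)"
    using \<alpha> by (simp add: field_simps)
  finally show ?thesis .
qed

lemma abs_integral_div_powr_le:
  fixes d :: "real \<Rightarrow> real"
  assumes \<alpha>: "0 < \<alpha>" "\<alpha> < 1" and \<delta>: "0 < \<delta>" "\<delta> \<le> 1"
    and cont: "continuous_on {0<..} d"
    and quad: "\<And>x. 0 < x \<Longrightarrow> \<bar>d x\<bar> \<le> x\<^sup>2"
    and weighted: "\<And>x. 0 < x \<Longrightarrow> \<bar>d x\<bar> \<le> \<delta> * (1 + x) powr \<alpha>"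
  shows "(\<lambda>x. d x / x powr (1 + 2*\<alpha>)) absolutely_integrable_on {0<..}"
    and "\<bar>integral {0<..} (\<lambda>x. d x / x powr (1 + 2*\<alpha>))\<bar>
           \<le> (1 / (2 - 2*\<alpha>) + 3 / (2*\<alpha>)) * \<delta> powr (1 - \<alpha>)"
proof -
  define t where "t = \<delta> powr (1/2)"
  have t: "0 < t" using \<delta> by (simp add: t_def)
  let ?k = "\<lambda>x. d x / x powr (1 + 2*\<alpha>)"
  define M where "M x = (if x \<in> {0<..t} then x powr (1 - 2*\<alpha>) else 0)
           + (if x \<in> {t..} then \<delta> * x powr (-1 - 2*\<alpha>) + \<delta> * x powr (-1 - \<alpha>) else 0)" for x
  have M: "(M has_integral t powr (2 - 2*\<alpha>) / (2 - 2*\<alpha>) + \<delta> * (t powr (-2*\<alpha>) / (2*\<alpha>))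
                       + \<delta> * (t powr (-\<alpha>) / \<alpha>)) {0<..}"
    unfolding M_def using has_integral_powr_majorant[OF \<alpha> t] .
  then have M_int: "M integrable_on {0<..}"
    by (rule has_integral_integrable)
  have bound: "norm (?k x) \<le> M x" if "x \<in> {0<..}" for x
    using abs_div_powr_le_majorant \<alpha> \<delta> that quad weighted by (simp add: M_def)
  have "continuous_on {0<..} ?k"
    by (intro continuous_intros cont) auto
  then have "?k \<in> borel_measurable (lebesgue_on {0<..})"
    by (rule continuous_imp_measurable_on_sets_lebesgue) auto
  then show k_int: "?k absolutely_integrable_on {0<..}"
    by (rule measurable_bounded_by_integrable_imp_absolutely_integrable[OF _ _ M_int bound]) auto
  have "\<bar>integral {0<..} ?k\<bar> \<le> integral {0<..} M"
    using integral_norm_bound_integral[OF set_lebesgue_integral_eq_integral(1)[OF k_int] M_int bound]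
    by simp
  also have "\<dots> \<le> (1 / (2 - 2*\<alpha>) + 3 / (2*\<alpha>)) * \<delta> powr (1 - \<alpha>)"
    using integral_unique[OF M] powr_majorant_integral_at_sqrt_le[OF \<alpha> \<delta>] by (simp add: t_def)
  finally show "\<bar>integral {0<..} ?k\<bar> \<le> (1 / (2 - 2*\<alpha>) + 3 / (2*\<alpha>)) * \<delta> powr (1 - \<alpha>)" .
qed

lemma set_borel_integral_eq_integral_if_measurable:
  fixes g :: "'a::euclidean_space \<Rightarrow> real"
  assumes "g absolutely_integrable_on S"
    and "(\<lambda>x. indicator S x *\<^sub>R g x) \<in> borel_measurable lborel"
  shows "(LINT x:S|lborel. g x) = integral S g"
proof -
  have "(LINT x:S|lborel. g x) = (LINT x:S|lebesgue. g x)"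
    unfolding set_lebesgue_integral_def by (rule integral_completion[symmetric, OF assms(2)])
  also have "\<dots> = integral S g"
    by (rule set_lebesgue_integral_eq_integral(2)[OF assms(1)])
  finally show ?thesis .
qed

lemma rho_pos: "0 < rho \<alpha> x"
  by (simp add: rho_def)

lemma rho_le_one: "0 \<le> \<alpha> \<Longrightarrow> rho \<alpha> x \<le> 1"
  by (simp add: rho_def powr_minus ge_one_powr_ge_zero inverse_le_1_iff)

lemma abs_rho_mult_le:
  assumes "0 \<le> \<alpha>" "\<bar>g x\<bar> \<le> B"
  shows "\<bar>rho \<alpha> x * g x\<bar> \<le> B"
  using mult_mono[OF rho_le_one assms(2)] assms rho_pos[of \<alpha> x] by (simp add: abs_mult)

lemma bdd_above_weighted:
  "0 \<le> \<alpha> \<Longrightarrow> (\<And>x. \<bar>g x\<bar> \<le> B) \<Longrightarrow> bdd_above (range (\<lambda>x. \<bar>rho \<alpha> x * g x\<bar>))"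
  by (rule bdd_aboveI2) (rule abs_rho_mult_le)

lemma weighted_sup_norm_le:
  "0 \<le> \<alpha> \<Longrightarrow> (\<And>x. \<bar>g x\<bar> \<le> B) \<Longrightarrow> weighted_sup_norm \<alpha> g \<le> B"
  unfolding weighted_sup_norm_def by (intro cSUP_least abs_rho_mult_le) auto

lemma weighted_sup_norm_nonneg:
  "bdd_above (range (\<lambda>x. \<bar>rho \<alpha> x * g x\<bar>)) \<Longrightarrow> 0 \<le> weighted_sup_norm \<alpha> g"
  unfolding weighted_sup_norm_def by (rule order.trans[OF abs_ge_zero cSUP_upper[of 0]]) auto

lemma abs_le_weighted_sup_norm:
  assumes "bdd_above (range (\<lambda>x. \<bar>rho \<alpha> x * g x\<bar>))"
  shows "\<bar>g x\<bar> \<le> weighted_sup_norm \<alpha> g * (1 + \<bar>x\<bar>) powr \<alpha>"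
proof -
  have "rho \<alpha> x * \<bar>g x\<bar> \<le> weighted_sup_norm \<alpha> g"
    unfolding weighted_sup_norm_def using cSUP_upper[OF _ assms]
    by (simp add: abs_mult less_imp_le[OF rho_pos])
  then show ?thesis
    by (simp add: rho_def powr_minus field_simps)
qed

lemma V1_continuous: "f \<in> V1 \<alpha> \<Longrightarrow> continuous_on UNIV f"
  by (simp add: V1_def V0_def)

lemma V1_lower_bound: "f \<in> V1 \<alpha> \<Longrightarrow> max 0 (1 - x\<^sup>2) \<le> f x"
  by (simp add: V1_def)

lemma V1_le_one:
  assumes "f \<in> V1 \<alpha>"
  shows "f x \<le> 1"
proof -
  have "f x = f \<bar>x\<bar>"
    using assms by (cases "0 \<le> x") (auto simp: V1_def V0_def)
  also have "\<dots> \<le> f 0"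
    using assms abs_ge_zero unfolding V1_def by blast
  finally show ?thesis
    using assms by (simp add: V1_def)
qed

lemma V1_dist_le:
  assumes "f1 \<in> V1 \<alpha>" "f2 \<in> V1 \<alpha>"
  shows "\<bar>f1 x - f2 x\<bar> \<le> min 1 (x\<^sup>2)"
  using V1_lower_bound[OF assms(1), of x] V1_le_one[OF assms(1), of x]
    V1_lower_bound[OF assms(2), of x] V1_le_one[OF assms(2), of x] by (simp add: abs_le_iff)

lemma V1_integrable:
  assumes \<alpha>: "0 < \<alpha>" "\<alpha> < 1" and f: "f \<in> V1 \<alpha>"
  shows "(\<lambda>\<xi>. (1 - f \<xi>) / \<xi> powr (1 + 2*\<alpha>)) absolutely_integrable_on {0<..}"
proof (rule abs_integral_div_powr_le(1)[OF \<alpha>, of 1])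
  show "continuous_on {0<..} (\<lambda>\<xi>. 1 - f \<xi>)"
    using V1_continuous[OF f] by (intro continuous_intros) (auto intro: continuous_on_subset)
  show "\<bar>1 - f x\<bar> \<le> x\<^sup>2" for x
    using V1_lower_bound[OF f, of x] V1_le_one[OF f, of x] by simp
  show "\<bar>1 - f x\<bar> \<le> 1 * (1 + x) powr \<alpha>" if "0 < x" for x
    using V1_lower_bound[OF f, of x] V1_le_one[OF f, of x] ge_one_powr_ge_zero[of "1 + x" \<alpha>] that \<alpha>
    by simp
qed auto

lemma cf_eq_integral:
  assumes \<alpha>: "0 < \<alpha>" "\<alpha> < 1" and f: "f \<in> V1 \<alpha>"
  shows "cf \<alpha> f = 2 * \<alpha> * (1 + 2*\<alpha>) / 3 * c1 \<alpha>
                   * integral {0<..} (\<lambda>\<xi>. (1 - f \<xi>) / \<xi> powr (1 + 2*\<alpha>))"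
proof -
  have "(\<lambda>\<xi>. indicator {0<..} \<xi> *\<^sub>R ((1 - f \<xi>) / \<xi> powr (1 + 2*\<alpha>))) \<in> borel_measurable lborel"
    using borel_measurable_continuous_onI[OF V1_continuous[OF f]] by measurable
  then show ?thesis
    unfolding cf_def
    by (simp add: set_borel_integral_eq_integral_if_measurable[OF V1_integrable[OF \<alpha> f]])
qed

lemma cf_diff_eq_integral:
  assumes \<alpha>: "0 < \<alpha>" "\<alpha> < 1" and f1: "f1 \<in> V1 \<alpha>" and f2: "f2 \<in> V1 \<alpha>"
  shows "cf \<alpha> f2 - cf \<alpha> f1 = 2 * \<alpha> * (1 + 2*\<alpha>) / 3 * c1 \<alpha>
           * integral {0<..} (\<lambda>\<xi>. (f1 \<xi> - f2 \<xi>) / \<xi> powr (1 + 2*\<alpha>))"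
proof -
  have int: "(\<lambda>\<xi>. (1 - f \<xi>) / \<xi> powr (1 + 2*\<alpha>)) integrable_on {0<..}" if "f \<in> V1 \<alpha>" for f
    using set_lebesgue_integral_eq_integral(1)[OF V1_integrable[OF \<alpha> that]] .
  have "(\<lambda>\<xi>. (f1 \<xi> - f2 \<xi>) / \<xi> powr (1 + 2*\<alpha>))
          = (\<lambda>\<xi>. (1 - f2 \<xi>) / \<xi> powr (1 + 2*\<alpha>) - (1 - f1 \<xi>) / \<xi> powr (1 + 2*\<alpha>))"
    by (simp add: diff_divide_distrib)
  then show ?thesis
    using integral_diff[OF int[OF f2] int[OF f1]]
    by (simp add: cf_eq_integral[OF \<alpha> f1] cf_eq_integral[OF \<alpha> f2] right_diff_distrib)
qed

lemma V1_abs_integral_diff_le: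
  assumes \<alpha>: "0 < \<alpha>" "\<alpha> < 1" and f1: "f1 \<in> V1 \<alpha>" and f2: "f2 \<in> V1 \<alpha>"
  shows "\<bar>integral {0<..} (\<lambda>\<xi>. (f1 \<xi> - f2 \<xi>) / \<xi> powr (1 + 2*\<alpha>))\<bar>
           \<le> (1 / (2 - 2*\<alpha>) + 3 / (2*\<alpha>)) * weighted_sup_norm \<alpha> (\<lambda>x. f1 x - f2 x) powr (1 - \<alpha>)"
proof -
  define \<delta> where "\<delta> = weighted_sup_norm \<alpha> (\<lambda>x. f1 x - f2 x)"
  have dist: "\<bar>f1 x - f2 x\<bar> \<le> 1" for x
    using V1_dist_le[OF f1 f2] by simp
  have bdd: "bdd_above (range (\<lambda>x. \<bar>rho \<alpha> x * (f1 x - f2 x)\<bar>))"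
    using bdd_above_weighted[OF _ dist] \<alpha> by simp
  have weighted: "\<bar>f1 x - f2 x\<bar> \<le> \<delta> * (1 + \<bar>x\<bar>) powr \<alpha>" for x
    unfolding \<delta>_def by (rule abs_le_weighted_sup_norm[OF bdd])
  let ?C = "1 / (2 - 2*\<alpha>) + 3 / (2*\<alpha>)"
  have "\<bar>integral {0<..} (\<lambda>\<xi>. (f1 \<xi> - f2 \<xi>) / \<xi> powr (1 + 2*\<alpha>))\<bar> \<le> ?C * \<delta> powr (1 - \<alpha>)"
  proof (cases "\<delta> = 0")
    case True
    then have "f1 = f2" using weighted by fastforce
    then show ?thesis using \<alpha> by simp
  next
    case False
    then have "0 < \<delta>" using weighted_sup_norm_nonneg[OF bdd] by (simp add: \<delta>_def)
    moreover have "\<delta> \<le> 1" unfolding \<delta>_def using weighted_sup_norm_le[OF _ dist] \<alpha> by simp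
    ultimately show ?thesis
    proof (rule abs_integral_div_powr_le(2)[OF \<alpha>])
      show "continuous_on {0<..} (\<lambda>x. f1 x - f2 x)"
        using V1_continuous[OF f1] V1_continuous[OF f2]
        by (intro continuous_intros) (auto intro: continuous_on_subset)
      show "\<bar>f1 x - f2 x\<bar> \<le> x\<^sup>2" for x
        using V1_dist_le[OF f1 f2] by simp
      show "\<bar>f1 x - f2 x\<bar> \<le> \<delta> * (1 + x) powr \<alpha>" if "0 < x" for x
        using weighted[of x] that by simp
    qed
  qed
  then show ?thesis
    by (simp add: \<delta>_def)
qed

theorem mainTheorem5:
  fixes \<alpha> :: real
  assumes "0 < \<alpha>" and "\<alpha> < 1"
  shows "\<exists>C. \<forall>f1 \<in> V1 \<alpha>. \<forall>f2 \<in> V1 \<alpha>.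
           \<bar>cf \<alpha> f1 - cf \<alpha> f2\<bar> \<le> C * (weighted_sup_norm \<alpha> (\<lambda>x. f1 x - f2 x)) powr (1 - \<alpha>)"
proof (intro exI ballI)
  fix f1 f2 assume f1: "f1 \<in> V1 \<alpha>" and f2: "f2 \<in> V1 \<alpha>"
  define K where "K = 2 * \<alpha> * (1 + 2*\<alpha>) / 3 * c1 \<alpha>"
  let ?I = "integral {0<..} (\<lambda>\<xi>. (f1 \<xi> - f2 \<xi>) / \<xi> powr (1 + 2*\<alpha>))"
  have "\<bar>cf \<alpha> f1 - cf \<alpha> f2\<bar> = \<bar>K\<bar> * \<bar>?I\<bar>"
    using cf_diff_eq_integral[OF assms f1 f2] unfolding K_def by (metis abs_minus_commute abs_mult)
  also have "\<dots> \<le> \<bar>K\<bar> * ((1 / (2 - 2*\<alpha>) + 3 / (2*\<alpha>))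
                  * weighted_sup_norm \<alpha> (\<lambda>x. f1 x - f2 x) powr (1 - \<alpha>))"
    using V1_abs_integral_diff_le[OF assms f1 f2] by (rule mult_left_mono) simp
  finally show "\<bar>cf \<alpha> f1 - cf \<alpha> f2\<bar> \<le> \<bar>K\<bar> * (1 / (2 - 2*\<alpha>) + 3 / (2*\<alpha>))
      * weighted_sup_norm \<alpha> (\<lambda>x. f1 x - f2 x) powr (1 - \<alpha>)"
    by (simp add: mult.assoc)
qed

end
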